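(* Let $\mathcal E=(\mathcal E_t)_{t>0}$ be a product system and let $u=(u_t)_{t>0}$ be a normalized unit of $\mathcal E$. Then the set $A^{\mathcal E}_u$ of all additive units of $u$ is a Hilbert space under pointwise addition and scalar multiplication and the inner product $\langle a,b\rangle:=\langle a_1,b_1\rangle_{\mathcal E_1}$, and the set $R^{\mathcal E}_u$ of all roots of $u$ is a closed subspace of $A^{\mathcal E}_u$ of co-dimension one.
   Context: A product system (of Hilbert spaces, in the sense of Arveson) is a measurable family $(\mathcal E_t)_{t>0}$ of separable Hilbert spaces with an associative multiplication $\mathcal E_s\times\mathcal E_t\to\mathcal E_{s+t}$, $(a,b)\mapsto ab$, such that $\langle ab,a'b'\rangle=\langle a,a'\rangle\langle b,b'\rangle$ and $\mathcal E_{s+t}=\overline{\mathrm{span}}\,\mathcal E_s\mathcal E_t$ (so $a\otimes b\mapsto ab$ is a unitary $\mathcal E_s\otimes\mathcal E_t\cong\mathcal E_{s+t}$), with the usual measurability requirements. A unit is a measurable section $(u_t)_{t>0}$ of nonzero vectors $u_t\in\mathcal E_t$ with $u_{s+t}=u_su_t$ for all $s,t>0$; it is normalized if $\|u_t\|=1$ for all $t$. An additive unit of a unit $u$ is a measurable section $(a_t)_{t>0}$, $a_t\in\mathcal E_t$, with $a_{s+t}=a_su_t+u_sa_t$ for all $s,t>0$. A root of $u$ is an additive unit $a$ of $u$ with $\langle a_t,u_t\rangle=0$ for all $t>0$. *)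

theory Defs
  imports "HOL-Analysis.Analysis"
begin

text \<open>Every separable Hilbert space is isometric to a closed subspace of l2(N).
  We realise each fibre of a product system as a closed subspace of l2(N),
  whose vectors are represented as functions nat => complex.\<close>

type_synonym l2vec = "nat \<Rightarrow> complex"

definition l2 :: "l2vec set" where
  "l2 = {x. summable (\<lambda>n. (cmod (x n))\<^sup>2)}"

definition l2_inner :: "l2vec \<Rightarrow> l2vec \<Rightarrow> complex" where
  "l2_inner x y = (\<Sum>n. x n * cnj (y n))"

definition l2_norm :: "l2vec \<Rightarrow> real" where
  "l2_norm x = sqrt (\<Sum>n. (cmod (x n))\<^sup>2)"

definition l2_add :: "l2vec \<Rightarrow> l2vec \<Rightarrow> l2vec" where
  "l2_add x y = (\<lambda>n. x n + y n)"

definition l2_scale :: "complex \<Rightarrow> l2vec \<Rightarrow> l2vec" where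
  "l2_scale c x = (\<lambda>n. c * x n)"

definition l2_zero :: l2vec where
  "l2_zero = (\<lambda>n. 0)"

definition l2_diff :: "l2vec \<Rightarrow> l2vec \<Rightarrow> l2vec" where
  "l2_diff x y = (\<lambda>n. x n - y n)"

definition l2_closed_subspace :: "l2vec set \<Rightarrow> bool" where
  "l2_closed_subspace S \<longleftrightarrow>
     S \<subseteq> l2 \<and> l2_zero \<in> S \<and>
     (\<forall>x\<in>S. \<forall>y\<in>S. l2_add x y \<in> S) \<and>
     (\<forall>c. \<forall>x\<in>S. l2_scale c x \<in> S) \<and>
     (\<forall>X x. (\<forall>k. X k \<in> S) \<and> x \<in> l2 \<and>
            (\<lambda>k. l2_norm (l2_diff (X k) x)) \<longlonglongrightarrow> 0 \<longrightarrow> x \<in> S)"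

definition l2_span_dense :: "l2vec set \<Rightarrow> l2vec set \<Rightarrow> bool" where
  "l2_span_dense G S \<longleftrightarrow>
     (\<forall>z\<in>S. \<forall>\<epsilon>>0. \<exists>(m::nat) (c::nat \<Rightarrow> complex) g.
        (\<forall>i<m. g i \<in> G) \<and>
        l2_norm (\<lambda>k. z k - (\<Sum>i<m. c i * g i k)) < \<epsilon>)"

text \<open>A section of the family \<open>E\<close> is a map \<open>f\<close> with \<open>f t \<in> E t\<close> for \<open>t > 0\<close>;
  it is measurable if all its coordinates are Borel functions on (0,oo)
  (weak = Borel measurability in the separable space l2(N)).\<close>
definition meas_section :: "(real \<Rightarrow> l2vec set) \<Rightarrow> (real \<Rightarrow> l2vec) \<Rightarrow> bool" where
  "meas_section E f \<longleftrightarrow>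
     (\<forall>t>0. f t \<in> E t) \<and>
     (\<forall>n. (\<lambda>t. f t n) \<in> borel_measurable (restrict_space borel {0<..}))"

text \<open>\<open>pm s t x y\<close> is the product \<open>x y \<in> E (s+t)\<close> of \<open>x \<in> E s\<close> and \<open>y \<in> E t\<close>.\<close>
definition product_system ::
  "(real \<Rightarrow> l2vec set) \<Rightarrow> (real \<Rightarrow> real \<Rightarrow> l2vec \<Rightarrow> l2vec \<Rightarrow> l2vec) \<Rightarrow> bool" where
  "product_system E pm \<longleftrightarrow>
     (\<forall>t>0. l2_closed_subspace (E t)) \<and>
     (\<forall>s>0. \<forall>t>0. \<forall>x\<in>E s. \<forall>y\<in>E t. pm s t x y \<in> E (s + t)) \<and>
     (\<forall>r>0. \<forall>s>0. \<forall>t>0. \<forall>x\<in>E r. \<forall>y\<in>E s. \<forall>z\<in>E t.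
        pm (r + s) t (pm r s x y) z = pm r (s + t) x (pm s t y z)) \<and>
     (\<forall>s>0. \<forall>t>0. \<forall>x\<in>E s. \<forall>x'\<in>E s. \<forall>y\<in>E t. \<forall>y'\<in>E t.
        l2_inner (pm s t x y) (pm s t x' y') = l2_inner x x' * l2_inner y y') \<and>
     (\<forall>s>0. \<forall>t>0. l2_span_dense {pm s t x y |x y. x \<in> E s \<and> y \<in> E t} (E (s + t))) \<and>
     \<comment> \<open>measurability: a fundamental sequence of measurable sections \<dots>\<close>
     (\<exists>\<xi>::nat \<Rightarrow> real \<Rightarrow> l2vec. (\<forall>k. meas_section E (\<xi> k)) \<and>
        (\<forall>t>0. l2_span_dense (range (\<lambda>k. \<xi> k t)) (E t))) \<and>
     \<comment> \<open>\<dots> and jointly measurable multiplication\<close>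
     (\<forall>x y. meas_section E x \<and> meas_section E y \<longrightarrow>
        (\<forall>n. (\<lambda>(s, t). pm s t (x s) (y t) n)
               \<in> borel_measurable (restrict_space borel ({0<..} \<times> {0<..}))))"

definition ps_unit ::
  "(real \<Rightarrow> l2vec set) \<Rightarrow> (real \<Rightarrow> real \<Rightarrow> l2vec \<Rightarrow> l2vec \<Rightarrow> l2vec) \<Rightarrow> (real \<Rightarrow> l2vec) \<Rightarrow> bool" where
  "ps_unit E pm u \<longleftrightarrow>
     meas_section E u \<and> (\<forall>t>0. u t \<noteq> l2_zero) \<and>
     (\<forall>s>0. \<forall>t>0. u (s + t) = pm s t (u s) (u t))"

definition normalized_unit ::
  "(real \<Rightarrow> l2vec set) \<Rightarrow> (real \<Rightarrow> real \<Rightarrow> l2vec \<Rightarrow> l2vec \<Rightarrow> l2vec) \<Rightarrow> (real \<Rightarrow> l2vec) \<Rightarrow> bool" where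
  "normalized_unit E pm u \<longleftrightarrow> ps_unit E pm u \<and> (\<forall>t>0. l2_norm (u t) = 1)"

text \<open>Sections are only defined on (0,oo); to identify them as functions we
  normalise them to be \<open>0\<close> for \<open>t \<le> 0\<close>.\<close>
definition additive_unit ::
  "(real \<Rightarrow> l2vec set) \<Rightarrow> (real \<Rightarrow> real \<Rightarrow> l2vec \<Rightarrow> l2vec \<Rightarrow> l2vec) \<Rightarrow> (real \<Rightarrow> l2vec)
     \<Rightarrow> (real \<Rightarrow> l2vec) \<Rightarrow> bool" where
  "additive_unit E pm u a \<longleftrightarrow>
     meas_section E a \<and> (\<forall>t\<le>0. a t = l2_zero) \<and>
     (\<forall>s>0. \<forall>t>0. a (s + t) = l2_add (pm s t (a s) (u t)) (pm s t (u s) (a t)))"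

definition root ::
  "(real \<Rightarrow> l2vec set) \<Rightarrow> (real \<Rightarrow> real \<Rightarrow> l2vec \<Rightarrow> l2vec \<Rightarrow> l2vec) \<Rightarrow> (real \<Rightarrow> l2vec)
     \<Rightarrow> (real \<Rightarrow> l2vec) \<Rightarrow> bool" where
  "root E pm u a \<longleftrightarrow> additive_unit E pm u a \<and> (\<forall>t>0. l2_inner (a t) (u t) = 0)"

definition add_units where "add_units E pm u = {a. additive_unit E pm u a}"
definition roots where "roots E pm u = {a. root E pm u a}"

definition sec_add :: "(real \<Rightarrow> l2vec) \<Rightarrow> (real \<Rightarrow> l2vec) \<Rightarrow> real \<Rightarrow> l2vec" where
  "sec_add a b = (\<lambda>t. l2_add (a t) (b t))"
definition sec_scale :: "complex \<Rightarrow> (real \<Rightarrow> l2vec) \<Rightarrow> real \<Rightarrow> l2vec" where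
  "sec_scale c a = (\<lambda>t. l2_scale c (a t))"
definition sec_zero :: "real \<Rightarrow> l2vec" where
  "sec_zero = (\<lambda>t. l2_zero)"
definition sec_inner :: "(real \<Rightarrow> l2vec) \<Rightarrow> (real \<Rightarrow> l2vec) \<Rightarrow> complex" where
  "sec_inner a b = l2_inner (a 1) (b 1)"

definition hilbert_space ::
  "'v set \<Rightarrow> ('v \<Rightarrow> 'v \<Rightarrow> 'v) \<Rightarrow> (complex \<Rightarrow> 'v \<Rightarrow> 'v) \<Rightarrow> 'v \<Rightarrow> ('v \<Rightarrow> 'v \<Rightarrow> complex) \<Rightarrow> bool" where
  "hilbert_space V vadd smul zero ip \<longleftrightarrow>
     \<comment> \<open>complex vector space\<close>
     zero \<in> V \<and> (\<forall>x\<in>V. \<forall>y\<in>V. vadd x y \<in> V) \<and> (\<forall>c. \<forall>x\<in>V. smul c x \<in> V) \<and>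
     (\<forall>x\<in>V. \<forall>y\<in>V. \<forall>z\<in>V. vadd (vadd x y) z = vadd x (vadd y z)) \<and>
     (\<forall>x\<in>V. \<forall>y\<in>V. vadd x y = vadd y x) \<and>
     (\<forall>x\<in>V. vadd x zero = x) \<and>
     (\<forall>x\<in>V. \<exists>y\<in>V. vadd x y = zero) \<and>
     (\<forall>c d. \<forall>x\<in>V. smul c (smul d x) = smul (c * d) x) \<and>
     (\<forall>x\<in>V. smul 1 x = x) \<and>
     (\<forall>c. \<forall>x\<in>V. \<forall>y\<in>V. smul c (vadd x y) = vadd (smul c x) (smul c y)) \<and>
     (\<forall>c d. \<forall>x\<in>V. smul (c + d) x = vadd (smul c x) (smul d x)) \<and>
     \<comment> \<open>inner product\<close>
     (\<forall>x\<in>V. \<forall>y\<in>V. \<forall>z\<in>V. ip (vadd x y) z = ip x z + ip y z) \<and>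
     (\<forall>c. \<forall>x\<in>V. \<forall>y\<in>V. ip (smul c x) y = c * ip x y) \<and>
     (\<forall>x\<in>V. \<forall>y\<in>V. ip y x = cnj (ip x y)) \<and>
     (\<forall>x\<in>V. ip x x \<in> \<real> \<and> Re (ip x x) \<ge> 0) \<and>
     (\<forall>x\<in>V. ip x x = 0 \<longrightarrow> x = zero) \<and>
     \<comment> \<open>completeness w.r.t. the norm \<open>sqrt (Re (ip x x))\<close>\<close>
     (\<forall>X. (\<forall>k. X k \<in> V) \<and>
          (\<forall>\<epsilon>>0. \<exists>N. \<forall>m\<ge>N. \<forall>n\<ge>N.
              sqrt (Re (ip (vadd (X m) (smul (-1) (X n))) (vadd (X m) (smul (-1) (X n))))) < \<epsilon>)
        \<longrightarrow> (\<exists>x\<in>V. (\<lambda>k. sqrt (Re (ip (vadd (X k) (smul (-1) x)) (vadd (X k) (smul (-1) x)))))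
                    \<longlonglongrightarrow> 0))"

definition closed_subspace_of ::
  "'v set \<Rightarrow> 'v set \<Rightarrow> ('v \<Rightarrow> 'v \<Rightarrow> 'v) \<Rightarrow> (complex \<Rightarrow> 'v \<Rightarrow> 'v) \<Rightarrow> 'v \<Rightarrow> ('v \<Rightarrow> 'v \<Rightarrow> complex) \<Rightarrow> bool" where
  "closed_subspace_of W V vadd smul zero ip \<longleftrightarrow>
     W \<subseteq> V \<and> zero \<in> W \<and> (\<forall>x\<in>W. \<forall>y\<in>W. vadd x y \<in> W) \<and> (\<forall>c. \<forall>x\<in>W. smul c x \<in> W) \<and>
     (\<forall>X x. (\<forall>k. X k \<in> W) \<and> x \<in> V \<and>
        (\<lambda>k. sqrt (Re (ip (vadd (X k) (smul (-1) x)) (vadd (X k) (smul (-1) x))))) \<longlonglongrightarrow> 0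
        \<longrightarrow> x \<in> W)"

definition codim_one ::
  "'v set \<Rightarrow> 'v set \<Rightarrow> ('v \<Rightarrow> 'v \<Rightarrow> 'v) \<Rightarrow> (complex \<Rightarrow> 'v \<Rightarrow> 'v) \<Rightarrow> bool" where
  "codim_one W V vadd smul \<longleftrightarrow>
     (\<exists>a\<in>V. a \<notin> W \<and> (\<forall>b\<in>V. \<exists>c. \<exists>r\<in>W. b = vadd r (smul c a)))"

end

theory Submission
  imports Defs
begin

text \<open>The functions \<open>t \<mapsto> \<langle>a\<^sub>t, u\<^sub>t\<rangle>\<close> for an additive unit \<open>a\<close>, and \<open>t \<mapsto> \<parallel>r\<^sub>t\<parallel>\<^sup>2\<close> for a root \<open>r\<close>,
  are measurable solutions of Cauchy's functional equation on \<open>(0, \<infinity>)\<close>, hence linear. So every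
  additive unit splits as \<open>a = r + \<langle>a\<^sub>1, u\<^sub>1\<rangle> (t u\<^sub>t)\<close> with a root \<open>r\<close>, and
  \<open>\<parallel>a\<^sub>t\<parallel>\<^sup>2 = t \<parallel>r\<^sub>1\<parallel>\<^sup>2 + t\<^sup>2 |\<langle>a\<^sub>1, u\<^sub>1\<rangle>|\<^sup>2 \<le> (t + t\<^sup>2) \<parallel>a\<^sub>1\<parallel>\<^sup>2\<close>. Thus the norm at time 1
  controls the whole section: it is definite, a Cauchy sequence at time 1 is Cauchy at every time,
  and its pointwise limit is again an additive unit because the multiplication is bilinear and
  isometric in each factor. The roots form the kernel of the continuous functional
  \<open>a \<mapsto> \<langle>a\<^sub>1, u\<^sub>1\<rangle>\<close>, which does not vanish on the additive unit \<open>t u\<^sub>t\<close>.\<close>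

section \<open>Measurable solutions of Cauchy's functional equation\<close>

lemma arctan_diff_le: "\<bar>arctan x - arctan y\<bar> \<le> \<bar>x - y\<bar>"
proof -
  have "arctan b - arctan a \<le> b - a" if "a \<le> b" for a b :: real
  proof -
    have "(\<lambda>z. z - arctan z) a \<le> (\<lambda>z. z - arctan z) b"
    proof (rule DERIV_nonneg_imp_nondecreasing[OF that])
      fix z :: real
      have "inverse (1 + z\<^sup>2) \<le> 1"
        by (simp add: inverse_le_1_iff add_pos_nonneg)
      moreover have "((\<lambda>z. z - arctan z) has_real_derivative 1 - inverse (1 + z\<^sup>2)) (at z)"
        by (intro DERIV_diff DERIV_ident DERIV_arctan)
      ultimately show "\<exists>y. ((\<lambda>z. z - arctan z) has_real_derivative y) (at z) \<and> 0 \<le> y"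
        by auto
    qed
    then show ?thesis by simp
  qed
  moreover have "arctan a \<le> arctan b" if "a \<le> b" for a b
    using that arctan_less_iff[of b a] by linarith
  ultimately show ?thesis
    by (cases "y \<le> x") (smt (verit))+
qed

lemma integrable_indicator_times_bounded:
  fixes g :: "real \<Rightarrow> real"
  assumes "g \<in> borel_measurable borel" and "\<And>x. \<bar>g x\<bar> \<le> B"
  shows "integrable lborel (\<lambda>x. indicator {a..b} x * g x)"
proof (rule Bochner_Integration.integrable_bound)
  show "integrable lborel (\<lambda>x. B * indicator {a..b} x :: real)"
    by (intro integrable_mult_right integrable_real_indicator) (auto simp: emeasure_lborel_Icc_eq)
  show "AE x in lborel. norm (indicator {a..b} x * g x) \<le> norm (B * indicator {a..b} x :: real)"
    using assms(2) order_trans[OF abs_ge_zero assms(2)] by (auto simp: indicator_def)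
qed (use assms(1) in simp)

lemma lipschitz_integral_sliding_window:
  fixes g :: "real \<Rightarrow> real"
  assumes g: "g \<in> borel_measurable borel" and bound: "\<And>x. \<bar>g x\<bar> \<le> B"
  shows "(2 * B)-lipschitz_on UNIV (\<lambda>s. \<integral>x. indicator {a+s..b+s} x * g x \<partial>lborel)"
proof -
  have B: "B \<ge> 0" using order_trans[OF abs_ge_zero bound] .
  note int = integrable_indicator_times_bounded[OF g bound]
  have "\<bar>(\<integral>x. indicator {a+s..b+s} x * g x \<partial>lborel) - (\<integral>x. indicator {a+s'..b+s'} x * g x \<partial>lborel)\<bar>
      \<le> 2 * B * (s' - s)" if "s \<le> s'" for s s'
  proof -
    have "\<bar>(\<integral>x. indicator {a+s..b+s} x * g x \<partial>lborel) - (\<integral>x. indicator {a+s'..b+s'} x * g x \<partial>lborel)\<bar>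
        = \<bar>\<integral>x. (indicator {a+s..b+s} x - indicator {a+s'..b+s'} x) * g x \<partial>lborel\<bar>"
      unfolding left_diff_distrib by (subst Bochner_Integration.integral_diff) (use int in auto)
    also have "\<dots> \<le> (\<integral>x. \<bar>(indicator {a+s..b+s} x - indicator {a+s'..b+s'} x) * g x\<bar> \<partial>lborel)"
      using integral_norm_bound[of lborel "\<lambda>x. (indicator {a+s..b+s} x - indicator {a+s'..b+s'} x) * g x"]
      by simp
    also have "\<dots> \<le> (\<integral>x. B * indicator {a+s..a+s'} x + B * indicator {b+s..b+s'} x \<partial>lborel)"
    proof (rule integral_mono)
      show "integrable lborel (\<lambda>x. \<bar>(indicator {a+s..b+s} x - indicator {a+s'..b+s'} x) * g x\<bar>)"
        unfolding left_diff_distrib by (intro integrable_abs Bochner_Integration.integrable_diff int)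
      show "integrable lborel (\<lambda>x. B * indicator {a+s..a+s'} x + B * indicator {b+s..b+s'} x :: real)"
        by (intro Bochner_Integration.integrable_add integrable_mult_right integrable_real_indicator)
          (auto simp: emeasure_lborel_Icc_eq)
      fix x
      have "\<bar>indicator {a+s..b+s} x - indicator {a+s'..b+s'} x :: real\<bar>
          \<le> indicator {a+s..a+s'} x + indicator {b+s..b+s'} x"
        using that by (auto simp: indicator_def)
      then have "\<bar>indicator {a+s..b+s} x - indicator {a+s'..b+s'} x\<bar> * \<bar>g x\<bar>
          \<le> (indicator {a+s..a+s'} x + indicator {b+s..b+s'} x) * B"
        using bound[of x] B by (intro mult_mono) auto
      then show "\<bar>(indicator {a+s..b+s} x - indicator {a+s'..b+s'} x) * g x\<bar>
          \<le> B * indicator {a+s..a+s'} x + B * indicator {b+s..b+s'} x"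
        by (simp only: abs_mult distrib_left mult.commute)
    qed
    also have "\<dots> = 2 * B * (s' - s)"
      using that by (simp add: algebra_simps)
    finally show ?thesis .
  qed
  note le = this
  show ?thesis
  proof (rule lipschitz_onI)
    fix s s' :: real
    show "dist (\<integral>x. indicator {a+s..b+s} x * g x \<partial>lborel) (\<integral>x. indicator {a+s'..b+s'} x * g x \<partial>lborel)
        \<le> 2 * B * dist s s'"
      using le[of s s'] le[of s' s] by (cases "s \<le> s'") (auto simp: dist_real_def abs_minus_commute)
  qed (use B in simp)
qed

lemma abs_arctan_le_pi_half: "\<bar>arctan x\<bar> \<le> pi / 2"
  using arctan_bounded[of x] by linarith

lemma lipschitz_integral_arctan_offset:
  fixes F :: "real \<Rightarrow> real"
  assumes [measurable]: "F \<in> borel_measurable borel" and "a \<le> b"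
  shows "(b - a)-lipschitz_on UNIV (\<lambda>c. \<integral>x. indicator {a..b} x * arctan (c + F x) \<partial>lborel)"
proof (rule lipschitz_onI)
  fix c d :: real
  have int: "integrable lborel (\<lambda>x. indicator {a..b} x * arctan (e + F x))" for e
    by (rule integrable_indicator_times_bounded[OF _ abs_arctan_le_pi_half]) simp
  have "\<bar>(\<integral>x. indicator {a..b} x * arctan (c + F x) \<partial>lborel) - (\<integral>x. indicator {a..b} x * arctan (d + F x) \<partial>lborel)\<bar>
      = \<bar>\<integral>x. indicator {a..b} x * (arctan (c + F x) - arctan (d + F x)) \<partial>lborel\<bar>"
    unfolding right_diff_distrib by (subst Bochner_Integration.integral_diff) (use int in auto)
  also have "\<dots> \<le> (\<integral>x. \<bar>indicator {a..b} x * (arctan (c + F x) - arctan (d + F x))\<bar> \<partial>lborel)"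
    using integral_norm_bound[of lborel "\<lambda>x. indicator {a..b} x * (arctan (c + F x) - arctan (d + F x))"]
    by simp
  also have "\<dots> \<le> (\<integral>x. \<bar>c - d\<bar> * indicator {a..b} x \<partial>lborel)"
  proof (rule integral_mono)
    show "integrable lborel (\<lambda>x. \<bar>indicator {a..b} x * (arctan (c + F x) - arctan (d + F x))\<bar>)"
      unfolding right_diff_distrib by (intro integrable_abs Bochner_Integration.integrable_diff int)
    show "integrable lborel (\<lambda>x. \<bar>c - d\<bar> * indicator {a..b} x :: real)"
      by (intro integrable_mult_right integrable_real_indicator) (auto simp: emeasure_lborel_Icc_eq)
    show "\<bar>indicator {a..b} x * (arctan (c + F x) - arctan (d + F x))\<bar> \<le> \<bar>c - d\<bar> * indicator {a..b} x" for x
      using arctan_diff_le[of "c + F x" "d + F x"] by (auto simp: indicator_def)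
  qed
  also have "\<dots> = (b - a) * \<bar>c - d\<bar>"
    using \<open>a \<le> b\<close> by simp
  finally show "dist (\<integral>x. indicator {a..b} x * arctan (c + F x) \<partial>lborel)
      (\<integral>x. indicator {a..b} x * arctan (d + F x) \<partial>lborel) \<le> (b - a) * dist c d"
    by (simp add: dist_real_def)
qed (use \<open>a \<le> b\<close> in simp)

lemma strict_mono_integral_arctan_offset:
  fixes F :: "real \<Rightarrow> real"
  assumes [measurable]: "F \<in> borel_measurable borel" and "a < b"
  shows "strict_mono (\<lambda>c. \<integral>x. indicator {a..b} x * arctan (c + F x) \<partial>lborel)"
proof (rule strict_monoI)
  fix c d :: real
  assume "c < d"
  define g where "g x = indicator {a..b} x * (arctan (d + F x) - arctan (c + F x))" for x
  have int: "integrable lborel (\<lambda>x. indicator {a..b} x * arctan (e + F x))" for e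
    by (rule integrable_indicator_times_bounded[OF _ abs_arctan_le_pi_half]) simp
  have g_eq: "integral\<^sup>L lborel g = (\<integral>x. indicator {a..b} x * arctan (d + F x) \<partial>lborel)
      - (\<integral>x. indicator {a..b} x * arctan (c + F x) \<partial>lborel)"
    unfolding g_def right_diff_distrib by (subst Bochner_Integration.integral_diff) (use int in auto)
  have g_int: "integrable lborel g"
    unfolding g_def right_diff_distrib by (intro Bochner_Integration.integrable_diff int)
  have g_pos: "0 < g x" if "x \<in> {a..b}" for x
    using that \<open>c < d\<close> arctan_less_iff[of "c + F x" "d + F x"] by (simp add: g_def)
  have g_nonneg: "0 \<le> g x" for x
    using g_pos[of x] by (cases "x \<in> {a..b}") (auto simp: g_def)
  have "integral\<^sup>L lborel g \<noteq> 0"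
  proof
    assume "integral\<^sup>L lborel g = 0"
    then have "AE x in lborel. g x = 0"
      using integral_nonneg_eq_0_iff_AE[OF g_int] g_nonneg by simp
    then have "AE x in lborel. x \<notin> {a..b}"
      by (rule eventually_mono) (use g_pos in force)
    then have "emeasure lborel {a..b} = 0"
      by (subst (asm) AE_iff_measurable[of "{a..b}"]) auto
    with \<open>a < b\<close> show False by simp
  qed
  moreover have "0 \<le> integral\<^sup>L lborel g"
    using g_nonneg by (rule Bochner_Integration.integral_nonneg)
  ultimately show "(\<integral>x. indicator {a..b} x * arctan (c + F x) \<partial>lborel)
      < (\<integral>x. indicator {a..b} x * arctan (d + F x) \<partial>lborel)"
    using g_eq by linarith
qed

lemma additive_nat_mult:
  fixes f :: "real \<Rightarrow> 'a::real_vector"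
  assumes add: "\<And>s t. 0 < s \<Longrightarrow> 0 < t \<Longrightarrow> f (s + t) = f s + f t" and "0 < x"
  shows "f (real (Suc n) * x) = real (Suc n) *\<^sub>R f x"
proof (induction n)
  case (Suc n)
  have "f (real (Suc (Suc n)) * x) = f (real (Suc n) * x + x)"
    by (simp add: algebra_simps)
  also have "\<dots> = f (real (Suc n) * x) + f x"
    using \<open>0 < x\<close> by (intro add) auto
  also have "\<dots> = (real (Suc n) + 1) *\<^sub>R f x"
    by (simp only: Suc.IH scaleR_add_left scaleR_one)
  finally show ?case
    by simp
qed simp

lemma additive_Rats_linear:
  fixes f :: "real \<Rightarrow> 'a::real_vector"
  assumes add: "\<And>s t. 0 < s \<Longrightarrow> 0 < t \<Longrightarrow> f (s + t) = f s + f t"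
    and "q \<in> \<rat>" "0 < q"
  shows "f q = q *\<^sub>R f 1"
proof -
  obtain m n where q: "q = real (Suc m) / real (Suc n)"
  proof -
    obtain a b where "0 < b" "q = of_int a / of_int b"
      using Rats_cases'[OF \<open>q \<in> \<rat>\<close>] by metis
    moreover from this \<open>0 < q\<close> have "0 < a"
      by (simp add: zero_less_divide_iff)
    ultimately show ?thesis
      by (intro that[of "nat (a - 1)" "nat (b - 1)"]) (simp add: of_nat_diff)
  qed
  have "real (Suc n) *\<^sub>R f q = f (real (Suc n) * q)"
    using additive_nat_mult[OF add \<open>0 < q\<close>] by simp
  also have "\<dots> = f (real (Suc m) * 1)"
    using q by simp
  also have "\<dots> = real (Suc m) *\<^sub>R f 1"
    using additive_nat_mult[OF add, of 1 m] by simp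
  finally have "inverse (real (Suc n)) *\<^sub>R (real (Suc n) *\<^sub>R f q)
      = inverse (real (Suc n)) *\<^sub>R (real (Suc m) *\<^sub>R f 1)"
    by simp
  then show ?thesis
    using q by (simp add: divide_inverse_commute del: of_nat_Suc)
qed

lemma additive_measurable_linear:
  fixes f :: "real \<Rightarrow> real"
  assumes meas: "f \<in> borel_measurable (restrict_space borel {0<..})"
    and add: "\<And>s t. 0 < s \<Longrightarrow> 0 < t \<Longrightarrow> f (s + t) = f s + f t"
    and "0 < t"
  shows "f t = t * f 1"
proof -
  define F where "F x = (if 0 < x then f x else 0)" for x
  have [measurable]: "F \<in> borel_measurable borel"
    using meas unfolding F_def by (subst (asm) measurable_restrict_space_iff) auto
  txt \<open>Averaging the bounded, strictly increasing \<open>arctan\<close> over a window turns \<open>f\<close> into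
    \<open>G (f s) = H s\<close>, where \<open>H\<close> is continuous in \<open>s\<close> without any regularity of \<open>f\<close>.\<close>
  define G where "G c = (\<integral>x. indicator {1..2} x * arctan (c + F x) \<partial>lborel)" for c
  define H where "H s = (\<integral>x. indicator {1+s..2+s} x * arctan (F x) \<partial>lborel)" for s
  have G_H: "G (f s) = H s" if "0 < s" for s
  proof -
    have "H s = (\<integral>x. indicator {1+s..2+s} (s + 1 * x) * arctan (F (s + 1 * x)) \<partial>lborel)"
      unfolding H_def by (subst lborel_integral_real_affine[where c=1 and t=s]) simp_all
    also have "\<dots> = G (f s)"
      unfolding G_def
    proof (intro Bochner_Integration.integral_cong refl)
      fix x :: real
      show "indicator {1+s..2+s} (s + 1 * x) * arctan (F (s + 1 * x)) = indicator {1..2} x * arctan (f s + F x)"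
        using that by (cases "x \<in> {1..2}") (auto simp: indicator_def F_def add)
    qed
    finally show ?thesis ..
  qed
  have "continuous_on UNIV H"
    unfolding H_def
    by (rule lipschitz_on_continuous_on[OF lipschitz_integral_sliding_window[OF _ abs_arctan_le_pi_half]]) simp
  moreover have "continuous_on UNIV G"
    unfolding G_def by (rule lipschitz_on_continuous_on[OF lipschitz_integral_arctan_offset]) simp_all
  then have "continuous_on UNIV (\<lambda>s. G (s * f 1))"
    by (rule continuous_on_compose2) (auto intro: continuous_intros)
  ultimately have cont: "continuous_on UNIV (\<lambda>s. H s - G (s * f 1))"
    by (rule continuous_on_diff)
  have "H q - G (q * f 1) = 0" if "q \<in> \<rat> \<inter> {0<..}" for q
    using that G_H[of q] additive_Rats_linear[OF add, of q] by simp
  moreover have "t \<in> closure (\<rat> \<inter> {0<..})"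
    unfolding closure_approachable
  proof (intro allI impI)
    fix e :: real
    assume "0 < e"
    then obtain q where "q \<in> \<rat>" "t < q" "q < t + e"
      using Rats_dense_in_real[of t "t + e"] by auto
    then show "\<exists>q\<in>\<rat> \<inter> {0<..}. dist q t < e"
      using \<open>0 < t\<close> by (intro bexI[of _ q]) (auto simp: dist_real_def)
  qed
  ultimately have "H t - G (t * f 1) = 0"
    by (rule continuous_constant_on_closure[OF continuous_on_subset[OF cont subset_UNIV]])
  then have "G (f t) = G (t * f 1)"
    using G_H[OF \<open>0 < t\<close>] by simp
  moreover have "strict_mono G"
    unfolding G_def by (rule strict_mono_integral_arctan_offset) simp_all
  ultimately show ?thesis
    by (simp add: strict_mono_eq)
qed

lemma additive_measurable_linear_euclidean:
  fixes f :: "real \<Rightarrow> 'a::euclidean_space"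
  assumes meas: "f \<in> borel_measurable (restrict_space borel {0<..})"
    and add: "\<And>s t. 0 < s \<Longrightarrow> 0 < t \<Longrightarrow> f (s + t) = f s + f t"
    and "0 < t"
  shows "f t = t *\<^sub>R f 1"
proof (rule euclidean_eqI)
  fix b :: 'a
  assume "b \<in> Basis"
  have "(\<lambda>x. f x \<bullet> b) t = t * (\<lambda>x. f x \<bullet> b) 1"
    using meas add by (intro additive_measurable_linear \<open>0 < t\<close>) (auto simp: inner_add_left)
  then show "f t \<bullet> b = t *\<^sub>R f 1 \<bullet> b"
    by simp
qed

section \<open>The sequence space \<open>l2\<close>\<close>

lemma l2_iff_summable: "x \<in> l2 \<longleftrightarrow> summable (\<lambda>n. (cmod (x n))\<^sup>2)"
  unfolding l2_def by simp

lemma l2_summable_inner: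
  assumes "x \<in> l2" "y \<in> l2"
  shows "summable (\<lambda>n. x n * cnj (y n))"
proof (rule summable_norm_cancel, rule summable_comparison_test')
  show "summable (\<lambda>n. (cmod (x n))\<^sup>2 + (cmod (y n))\<^sup>2)"
    using assms by (intro summable_add) (simp_all add: l2_iff_summable)
  show "norm (norm (x n * cnj (y n))) \<le> (cmod (x n))\<^sup>2 + (cmod (y n))\<^sup>2" for n
  proof -
    have "cmod (x n) * cmod (y n) \<le> 2 * cmod (x n) * cmod (y n)"
      by simp
    also have "\<dots> \<le> (cmod (x n))\<^sup>2 + (cmod (y n))\<^sup>2"
      by (rule sum_squares_bound)
    finally show ?thesis
      by (simp add: norm_mult)
  qed
qed

lemma l2_inner_sums: "x \<in> l2 \<Longrightarrow> y \<in> l2 \<Longrightarrow> (\<lambda>n. x n * cnj (y n)) sums l2_inner x y"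
  unfolding l2_inner_def by (rule summable_sums[OF l2_summable_inner])

lemma l2_zero_mem [simp]: "l2_zero \<in> l2"
  unfolding l2_def l2_zero_def by simp

lemma l2_scale_mem: "x \<in> l2 \<Longrightarrow> l2_scale c x \<in> l2"
  unfolding l2_def l2_scale_def by (simp add: norm_mult power_mult_distrib summable_mult)

lemma l2_add_mem:
  assumes "x \<in> l2" "y \<in> l2"
  shows "l2_add x y \<in> l2"
  unfolding l2_iff_summable
proof (rule summable_comparison_test')
  show "summable (\<lambda>n. 2 * (cmod (x n))\<^sup>2 + 2 * (cmod (y n))\<^sup>2)"
    using assms by (intro summable_add summable_mult) (simp_all add: l2_iff_summable)
  fix n
  have "(cmod (x n + y n))\<^sup>2 \<le> (cmod (x n) + cmod (y n))\<^sup>2"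
    by (intro power_mono norm_triangle_ineq) simp
  also have "\<dots> \<le> 2 * (cmod (x n))\<^sup>2 + 2 * (cmod (y n))\<^sup>2"
    using sum_squares_bound[of "cmod (x n)" "cmod (y n)"]
    by (simp add: power2_eq_square algebra_simps)
  finally show "norm ((cmod (l2_add x y n))\<^sup>2) \<le> 2 * (cmod (x n))\<^sup>2 + 2 * (cmod (y n))\<^sup>2"
    by (simp add: l2_add_def)
qed

lemma l2_diff_eq: "l2_diff x y = l2_add x (l2_scale (-1) y)"
  unfolding l2_diff_def l2_add_def l2_scale_def by simp

lemma l2_diff_mem: "x \<in> l2 \<Longrightarrow> y \<in> l2 \<Longrightarrow> l2_diff x y \<in> l2"
  unfolding l2_diff_eq by (intro l2_add_mem l2_scale_mem)

lemma l2_inner_add_left: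
  assumes "x \<in> l2" "y \<in> l2" "z \<in> l2"
  shows "l2_inner (l2_add x y) z = l2_inner x z + l2_inner y z"
proof -
  have "(\<lambda>n. l2_add x y n * cnj (z n)) sums (l2_inner x z + l2_inner y z)"
    unfolding l2_add_def distrib_right using assms by (intro sums_add l2_inner_sums)
  then show ?thesis
    unfolding l2_inner_def by (rule sums_unique[symmetric])
qed

lemma l2_inner_scale_left:
  assumes "x \<in> l2" "y \<in> l2"
  shows "l2_inner (l2_scale c x) y = c * l2_inner x y"
proof -
  have "(\<lambda>n. c * (x n * cnj (y n))) sums (c * l2_inner x y)"
    using assms by (intro sums_mult l2_inner_sums)
  then show ?thesis
    unfolding l2_inner_def l2_scale_def mult.assoc by (rule sums_unique[symmetric])
qed

lemma l2_inner_commute: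
  assumes "x \<in> l2" "y \<in> l2"
  shows "l2_inner y x = cnj (l2_inner x y)"
proof -
  have "(\<lambda>n. y n * cnj (x n)) sums cnj (l2_inner x y)"
    using sums_cnj[THEN iffD2, OF l2_inner_sums[OF assms]] by (simp add: mult.commute)
  then show ?thesis
    unfolding l2_inner_def[of y x] by (rule sums_unique[symmetric])
qed

lemma l2_inner_add_right:
  "x \<in> l2 \<Longrightarrow> y \<in> l2 \<Longrightarrow> z \<in> l2 \<Longrightarrow> l2_inner z (l2_add x y) = l2_inner z x + l2_inner z y"
  by (metis complex_cnj_add l2_add_mem l2_inner_add_left l2_inner_commute)

lemma l2_inner_scale_right:
  "x \<in> l2 \<Longrightarrow> y \<in> l2 \<Longrightarrow> l2_inner y (l2_scale c x) = cnj c * l2_inner y x"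
  by (metis complex_cnj_mult l2_inner_commute l2_inner_scale_left l2_scale_mem)

lemma l2_inner_zero_left [simp]: "l2_inner l2_zero y = 0"
  unfolding l2_inner_def l2_zero_def by simp

lemma l2_norm_nonneg: "x \<in> l2 \<Longrightarrow> 0 \<le> l2_norm x"
  unfolding l2_norm_def l2_iff_summable by (simp add: suminf_nonneg)

lemma l2_norm_square: "x \<in> l2 \<Longrightarrow> (l2_norm x)\<^sup>2 = (\<Sum>n. (cmod (x n))\<^sup>2)"
  unfolding l2_norm_def l2_iff_summable by (simp add: suminf_nonneg)

lemma l2_inner_self:
  assumes "x \<in> l2"
  shows "l2_inner x x = of_real ((l2_norm x)\<^sup>2)"
proof -
  have "(\<lambda>n. complex_of_real ((cmod (x n))\<^sup>2)) sums of_real (\<Sum>n. (cmod (x n))\<^sup>2)"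
    by (rule sums_of_real[OF summable_sums]) (use assms in \<open>simp add: l2_iff_summable\<close>)
  then have "(\<lambda>n. x n * cnj (x n)) sums of_real (\<Sum>n. (cmod (x n))\<^sup>2)"
    by (simp only: complex_norm_square)
  then show ?thesis
    unfolding l2_norm_square[OF assms] l2_inner_def by (rule sums_unique[symmetric])
qed

lemma l2_norm_scale:
  assumes "x \<in> l2"
  shows "l2_norm (l2_scale c x) = cmod c * l2_norm x"
proof -
  have "(\<lambda>n. (cmod (l2_scale c x n))\<^sup>2) = (\<lambda>n. (cmod c)\<^sup>2 * (cmod (x n))\<^sup>2)"
    by (simp add: l2_scale_def norm_mult power_mult_distrib)
  then have "(\<Sum>n. (cmod (l2_scale c x n))\<^sup>2) = (cmod c)\<^sup>2 * (\<Sum>n. (cmod (x n))\<^sup>2)"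
    using assms by (simp add: suminf_mult l2_iff_summable)
  then show ?thesis
    unfolding l2_norm_def by (simp add: real_sqrt_mult)
qed

lemma l2_norm_coord_le:
  assumes "x \<in> l2"
  shows "cmod (x n) \<le> l2_norm x"
proof -
  have "(\<Sum>i\<in>{n}. (cmod (x i))\<^sup>2) \<le> (\<Sum>i. (cmod (x i))\<^sup>2)"
    using assms by (intro sum_le_suminf) (auto simp: l2_iff_summable)
  then have "(cmod (x n))\<^sup>2 \<le> (l2_norm x)\<^sup>2"
    using l2_norm_square[OF assms] by simp
  then show ?thesis
    using l2_norm_nonneg[OF assms] by (rule power2_le_imp_le)
qed

lemma l2_norm_eq_0:
  assumes "x \<in> l2" "l2_norm x = 0"
  shows "x = l2_zero"
  using l2_norm_coord_le[OF assms(1)] assms(2) by (auto simp: l2_zero_def)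

lemma l2_pythagoras:
  assumes x: "x \<in> l2" and y: "y \<in> l2" and orth: "l2_inner x y = 0"
  shows "(l2_norm (l2_add x y))\<^sup>2 = (l2_norm x)\<^sup>2 + (l2_norm y)\<^sup>2"
proof -
  have "l2_inner y x = 0"
    using l2_inner_commute[OF x y] orth by simp
  then have "l2_inner (l2_add x y) (l2_add x y) = l2_inner x x + l2_inner y y"
    using x y orth by (simp add: l2_inner_add_left l2_inner_add_right l2_add_mem)
  then have "complex_of_real ((l2_norm (l2_add x y))\<^sup>2) = of_real ((l2_norm x)\<^sup>2 + (l2_norm y)\<^sup>2)"
    by (simp only: l2_inner_self x y l2_add_mem of_real_add)
  then show ?thesis
    by (simp only: of_real_eq_iff)
qed

lemma l2_inner_unit_le:
  assumes x: "x \<in> l2" and u: "u \<in> l2" and "l2_norm u = 1"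
  shows "cmod (l2_inner x u) \<le> l2_norm x"
proof -
  define c where "c = l2_inner x u"
  have uu: "l2_inner u u = 1"
    using l2_inner_self[OF u] \<open>l2_norm u = 1\<close> by simp
  have cu: "l2_scale c u \<in> l2" and xcu: "l2_diff x (l2_scale c u) \<in> l2"
    using x u by (simp_all add: l2_scale_mem l2_diff_mem)
  have "l2_inner (l2_diff x (l2_scale c u)) (l2_scale c u) = cnj c * (l2_inner x u - c)"
    using x u uu cu unfolding l2_diff_eq
    by (simp add: l2_inner_add_left l2_inner_scale_left l2_inner_scale_right l2_scale_mem algebra_simps)
  then have "(l2_norm (l2_add (l2_diff x (l2_scale c u)) (l2_scale c u)))\<^sup>2
      = (l2_norm (l2_diff x (l2_scale c u)))\<^sup>2 + (l2_norm (l2_scale c u))\<^sup>2"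
    using xcu cu by (intro l2_pythagoras) (simp_all add: c_def)
  moreover have "l2_add (l2_diff x (l2_scale c u)) (l2_scale c u) = x"
    by (simp add: l2_add_def l2_diff_def)
  ultimately have "(cmod c)\<^sup>2 \<le> (l2_norm x)\<^sup>2"
    using u \<open>l2_norm u = 1\<close> by (simp add: l2_norm_scale)
  then show ?thesis
    unfolding c_def using l2_norm_nonneg[OF x] by (rule power2_le_imp_le)
qed

lemma l2_norm_tendsto_coord:
  assumes "\<And>k. X k \<in> l2" "x \<in> l2" "(\<lambda>k. l2_norm (l2_diff (X k) x)) \<longlonglongrightarrow> 0"
  shows "(\<lambda>k. X k n) \<longlonglongrightarrow> x n"
proof -
  have "(\<lambda>k. X k n - x n) \<longlonglongrightarrow> 0"
    using l2_norm_coord_le[OF l2_diff_mem[OF assms(1,2)]]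
    by (intro Lim_null_comparison[OF _ assms(3)]) (simp add: l2_diff_def)
  then show ?thesis
    by (rule LIM_zero_cancel)
qed

lemma l2_norm_diff_coord_limit_le:
  assumes y: "y \<in> l2" and X: "\<And>m. X m \<in> l2" and lim: "\<And>n. (\<lambda>m. X m n) \<longlonglongrightarrow> x n"
    and bound: "\<And>m. N \<le> m \<Longrightarrow> l2_norm (l2_diff y (X m)) \<le> e"
  shows "l2_diff y x \<in> l2" and "l2_norm (l2_diff y x) \<le> e"
proof -
  have e: "0 \<le> e"
    using bound[of N] l2_norm_nonneg[OF l2_diff_mem[OF y X], of N] by simp
  have partial: "(\<Sum>n<M. (cmod (l2_diff y x n))\<^sup>2) \<le> e\<^sup>2" for M
  proof (rule LIMSEQ_le_const2)
    show "(\<lambda>m. \<Sum>n<M. (cmod (l2_diff y (X m) n))\<^sup>2) \<longlonglongrightarrow> (\<Sum>n<M. (cmod (l2_diff y x n))\<^sup>2)"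
      unfolding l2_diff_def by (intro tendsto_intros lim)
    have "(\<Sum>n<M. (cmod (l2_diff y (X m) n))\<^sup>2) \<le> e\<^sup>2" if "N \<le> m" for m
    proof -
      have "(\<Sum>n<M. (cmod (l2_diff y (X m) n))\<^sup>2) \<le> (l2_norm (l2_diff y (X m)))\<^sup>2"
        using l2_diff_mem[OF y X] unfolding l2_norm_square[OF l2_diff_mem[OF y X]]
        by (intro sum_le_suminf) (auto simp: l2_iff_summable)
      also have "\<dots> \<le> e\<^sup>2"
        using bound[OF that] l2_norm_nonneg[OF l2_diff_mem[OF y X]] by (intro power_mono)
      finally show ?thesis .
    qed
    then show "\<exists>N. \<forall>m\<ge>N. (\<Sum>n<M. (cmod (l2_diff y (X m) n))\<^sup>2) \<le> e\<^sup>2"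
      by blast
  qed
  then show mem: "l2_diff y x \<in> l2"
    unfolding l2_iff_summable by (intro summableI_nonneg_bounded) simp_all
  have "(l2_norm (l2_diff y x))\<^sup>2 \<le> e\<^sup>2"
    unfolding l2_norm_square[OF mem] using mem partial
    by (intro suminf_le_const) (simp_all add: l2_iff_summable)
  then show "l2_norm (l2_diff y x) \<le> e"
    using e by (rule power2_le_imp_le)
qed

lemma l2_complete:
  assumes X: "\<And>k. X k \<in> l2"
    and Cauchy: "\<And>e. 0 < e \<Longrightarrow> \<exists>N. \<forall>m\<ge>N. \<forall>n\<ge>N. l2_norm (l2_diff (X m) (X n)) < e"
  defines "x \<equiv> \<lambda>n. lim (\<lambda>k. X k n)"
  shows "x \<in> l2" and "(\<lambda>k. l2_norm (l2_diff (X k) x)) \<longlonglongrightarrow> 0"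
proof -
  have coord: "(\<lambda>k. X k n) \<longlonglongrightarrow> x n" for n
  proof -
    have "Cauchy (\<lambda>k. X k n)"
    proof (rule metric_CauchyI)
      fix e :: real
      assume "0 < e"
      then obtain N where N: "\<forall>m\<ge>N. \<forall>k\<ge>N. l2_norm (l2_diff (X m) (X k)) < e"
        using Cauchy by blast
      have "dist (X m n) (X k n) < e" if "N \<le> m" "N \<le> k" for m k
        using l2_norm_coord_le[OF l2_diff_mem[OF X X], of m k n] N that
        by (fastforce simp: dist_norm l2_diff_def)
      then show "\<exists>N. \<forall>m\<ge>N. \<forall>k\<ge>N. dist (X m n) (X k n) < e"
        by blast
    qed
    then show ?thesis
      unfolding x_def by (simp add: Cauchy_convergent_iff convergent_LIMSEQ_iff)
  qed
  have tail: "\<exists>N. \<forall>k\<ge>N. l2_diff (X k) x \<in> l2 \<and> l2_norm (l2_diff (X k) x) \<le> e" if e: "0 < e" for e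
  proof -
    obtain N where "\<forall>m\<ge>N. \<forall>n\<ge>N. l2_norm (l2_diff (X m) (X n)) < e"
      using Cauchy[OF e] by blast
    then show ?thesis
      using l2_norm_diff_coord_limit_le[OF X X coord, of N] by (meson less_imp_le)
  qed
  then obtain N where "l2_diff (X N) x \<in> l2"
    by (meson order_refl zero_less_one)
  moreover have "x = l2_diff (X N) (l2_diff (X N) x)"
    by (simp add: l2_diff_def)
  ultimately show "x \<in> l2"
    using X l2_diff_mem by metis
  show "(\<lambda>k. l2_norm (l2_diff (X k) x)) \<longlonglongrightarrow> 0"
  proof (rule LIMSEQ_I)
    fix r :: real
    assume "0 < r"
    then obtain N where "\<forall>k\<ge>N. l2_norm (l2_diff (X k) x) \<le> r / 2"
      using tail[of "r / 2"] by auto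
    then have "norm (l2_norm (l2_diff (X k) x) - 0) < r" if "N \<le> k" for k
      using that \<open>0 < r\<close> l2_norm_nonneg[OF l2_diff_mem[OF X \<open>x \<in> l2\<close>], of k] by force
    then show "\<exists>N. \<forall>k\<ge>N. norm (l2_norm (l2_diff (X k) x) - 0) < r"
      by blast
  qed
qed

lemma l2_lincomb:
  fixes g :: "nat \<Rightarrow> l2vec" and m :: nat
  assumes "\<And>i. i < m \<Longrightarrow> g i \<in> l2" and d: "d \<in> l2"
  shows "(\<lambda>k. \<Sum>i<m. c i * g i k) \<in> l2 \<and>
    l2_inner (\<lambda>k. \<Sum>i<m. c i * g i k) d = (\<Sum>i<m. c i * l2_inner (g i) d)"
  using assms(1)
proof (induction m)
  case 0
  then show ?case
    using l2_zero_mem[unfolded l2_zero_def] l2_inner_zero_left[unfolded l2_zero_def] by simp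
next
  case (Suc m)
  have "(\<lambda>k. \<Sum>i<Suc m. c i * g i k) = l2_add (\<lambda>k. \<Sum>i<m. c i * g i k) (l2_scale (c m) (g m))"
    by (simp add: l2_add_def l2_scale_def)
  then show ?case
    using Suc d
    by (simp only: l2_add_mem l2_scale_mem l2_inner_add_left l2_inner_scale_left sum.lessThan_Suc)
qed

lemma l2_orthogonal_to_dense_span:
  assumes "d \<in> S" "S \<subseteq> l2" "G \<subseteq> l2" "l2_span_dense G S"
    and orth: "\<And>g. g \<in> G \<Longrightarrow> l2_inner g d = 0"
  shows "d = l2_zero"
proof -
  have d: "d \<in> l2"
    using assms(1,2) by blast
  have "l2_norm d \<le> e" if "0 < e" for e
  proof -
    obtain m :: nat and c g where gG: "\<forall>i<m. g i \<in> G"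
      and approx: "l2_norm (\<lambda>k. d k - (\<Sum>i<m. c i * g i k)) < e"
      using assms(1,4) \<open>0 < e\<close> unfolding l2_span_dense_def by blast
    define s where "s = (\<lambda>k. \<Sum>i<m. c i * g i k)"
    have "\<And>i. i < m \<Longrightarrow> g i \<in> l2"
      using gG assms(3) by blast
    note lincomb = l2_lincomb[of m g d c, OF this d]
    have s: "s \<in> l2"
      using lincomb unfolding s_def by blast
    have "l2_inner s d = 0"
      using lincomb gG orth unfolding s_def by simp
    then have "l2_inner d (l2_scale (-1) s) = 0"
      using d l2_inner_scale_right[OF s d, of "-1"] l2_inner_commute[OF s d] by simp
    then have "(l2_norm (l2_add d (l2_scale (-1) s)))\<^sup>2 = (l2_norm d)\<^sup>2 + (l2_norm s)\<^sup>2"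
      using l2_pythagoras[OF d l2_scale_mem[OF s]] l2_norm_scale[OF s, of "-1"] by simp
    then have "(l2_norm d)\<^sup>2 \<le> (l2_norm (l2_add d (l2_scale (-1) s)))\<^sup>2"
      by simp
    then have "l2_norm d \<le> l2_norm (l2_add d (l2_scale (-1) s))"
      using l2_norm_nonneg[OF l2_add_mem[OF d l2_scale_mem[OF s]]] by (rule power2_le_imp_le)
    also have "l2_add d (l2_scale (-1) s) = (\<lambda>k. d k - (\<Sum>i<m. c i * g i k))"
      by (simp add: s_def l2_add_def l2_scale_def)
    finally show ?thesis
      using approx by simp
  qed
  then have "l2_norm d = 0"
    using l2_norm_nonneg[OF d] field_le_epsilon[of "l2_norm d" 0] by simp
  then show ?thesis
    by (rule l2_norm_eq_0[OF d])
qed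

section \<open>Product systems\<close>

lemma borel_measurable_cnj [measurable]: "cnj \<in> borel_measurable borel"
  by (intro borel_measurable_continuous_onI continuous_intros)

locale product_system_l2 =
  fixes E :: "real \<Rightarrow> l2vec set"
    and pm :: "real \<Rightarrow> real \<Rightarrow> l2vec \<Rightarrow> l2vec \<Rightarrow> l2vec"
  assumes product_system: "product_system E pm"
begin

lemma fibre_closed_subspace: "0 < t \<Longrightarrow> l2_closed_subspace (E t)"
  using product_system unfolding product_system_def by (elim conjE) simp

lemma fibre_l2: "0 < t \<Longrightarrow> x \<in> E t \<Longrightarrow> x \<in> l2"
  using fibre_closed_subspace[of t] unfolding l2_closed_subspace_def by blast

lemma fibre_add: "0 < t \<Longrightarrow> x \<in> E t \<Longrightarrow> y \<in> E t \<Longrightarrow> l2_add x y \<in> E t"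
  using fibre_closed_subspace[of t] unfolding l2_closed_subspace_def by blast

lemma fibre_scale: "0 < t \<Longrightarrow> x \<in> E t \<Longrightarrow> l2_scale c x \<in> E t"
  using fibre_closed_subspace[of t] unfolding l2_closed_subspace_def by blast

lemma fibre_diff: "0 < t \<Longrightarrow> x \<in> E t \<Longrightarrow> y \<in> E t \<Longrightarrow> l2_diff x y \<in> E t"
  unfolding l2_diff_eq by (intro fibre_add fibre_scale)

lemma fibre_closed:
  "0 < t \<Longrightarrow> (\<And>k. X k \<in> E t) \<Longrightarrow> x \<in> l2 \<Longrightarrow> (\<lambda>k. l2_norm (l2_diff (X k) x)) \<longlonglongrightarrow> 0 \<Longrightarrow> x \<in> E t"
  using fibre_closed_subspace[of t] unfolding l2_closed_subspace_def by blast

lemma pm_mem: "0 < s \<Longrightarrow> 0 < t \<Longrightarrow> x \<in> E s \<Longrightarrow> y \<in> E t \<Longrightarrow> pm s t x y \<in> E (s + t)"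
  using product_system unfolding product_system_def by (elim conjE) simp

lemma pm_l2: "0 < s \<Longrightarrow> 0 < t \<Longrightarrow> x \<in> E s \<Longrightarrow> y \<in> E t \<Longrightarrow> pm s t x y \<in> l2"
  by (rule fibre_l2[OF _ pm_mem]) simp_all

lemma pm_inner:
  "0 < s \<Longrightarrow> 0 < t \<Longrightarrow> x \<in> E s \<Longrightarrow> x' \<in> E s \<Longrightarrow> y \<in> E t \<Longrightarrow> y' \<in> E t \<Longrightarrow>
    l2_inner (pm s t x y) (pm s t x' y') = l2_inner x x' * l2_inner y y'"
  using product_system unfolding product_system_def by (elim conjE) simp

lemma pm_span_dense:
  "0 < s \<Longrightarrow> 0 < t \<Longrightarrow> l2_span_dense {pm s t x y |x y. x \<in> E s \<and> y \<in> E t} (E (s + t))"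
  using product_system unfolding product_system_def by (elim conjE) simp

lemma pm_eqI:
  assumes st: "0 < s" "0 < t" and A: "A \<in> E (s + t)" and B: "B \<in> E (s + t)"
    and eq: "\<And>z w. z \<in> E s \<Longrightarrow> w \<in> E t \<Longrightarrow> l2_inner A (pm s t z w) = l2_inner B (pm s t z w)"
  shows "A = B"
proof -
  have st': "0 < s + t"
    using st by simp
  have l2: "A \<in> l2" "B \<in> l2"
    using A B fibre_l2[OF st'] by auto
  have "l2_diff A B = l2_zero"
  proof (rule l2_orthogonal_to_dense_span[OF fibre_diff[OF st' A B] _ _ pm_span_dense[OF st]])
    show "E (s + t) \<subseteq> l2" "{pm s t x y |x y. x \<in> E s \<and> y \<in> E t} \<subseteq> l2"
      using fibre_l2[OF st'] pm_l2[OF st] by blast+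
    fix g
    assume "g \<in> {pm s t x y |x y. x \<in> E s \<and> y \<in> E t}"
    then obtain z w where g: "g = pm s t z w" "z \<in> E s" "w \<in> E t"
      by blast
    then have "g \<in> l2"
      using pm_l2[OF st] by simp
    have "l2_inner (l2_diff A B) g = 0"
      using l2 \<open>g \<in> l2\<close> eq[OF g(2,3)] unfolding l2_diff_eq g(1)
      by (simp add: l2_inner_add_left l2_inner_scale_left l2_scale_mem)
    then show "l2_inner g (l2_diff A B) = 0"
      using l2_inner_commute[OF l2_diff_mem[OF l2] \<open>g \<in> l2\<close>] by simp
  qed
  then show ?thesis
    by (simp add: l2_diff_def l2_zero_def fun_eq_iff)
qed

lemma pm_add_left:
  assumes st: "0 < s" "0 < t" and x: "x \<in> E s" "x' \<in> E s" and y: "y \<in> E t"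
  shows "pm s t (l2_add x x') y = l2_add (pm s t x y) (pm s t x' y)"
proof (rule pm_eqI[OF st])
  show "pm s t (l2_add x x') y \<in> E (s + t)" "l2_add (pm s t x y) (pm s t x' y) \<in> E (s + t)"
    using assms by (simp_all add: pm_mem fibre_add)
  show "l2_inner (pm s t (l2_add x x') y) (pm s t z w) = l2_inner (l2_add (pm s t x y) (pm s t x' y)) (pm s t z w)"
    if "z \<in> E s" "w \<in> E t" for z w
    using assms that by (simp add: pm_inner pm_l2 fibre_add fibre_l2 l2_inner_add_left distrib_right)
qed

lemma pm_add_right:
  assumes st: "0 < s" "0 < t" and x: "x \<in> E s" and y: "y \<in> E t" "y' \<in> E t"
  shows "pm s t x (l2_add y y') = l2_add (pm s t x y) (pm s t x y')"
proof (rule pm_eqI[OF st])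
  show "pm s t x (l2_add y y') \<in> E (s + t)" "l2_add (pm s t x y) (pm s t x y') \<in> E (s + t)"
    using assms by (simp_all add: pm_mem fibre_add)
  show "l2_inner (pm s t x (l2_add y y')) (pm s t z w) = l2_inner (l2_add (pm s t x y) (pm s t x y')) (pm s t z w)"
    if "z \<in> E s" "w \<in> E t" for z w
    using assms that by (simp add: pm_inner pm_l2 fibre_add fibre_l2 l2_inner_add_left distrib_left)
qed

lemma pm_scale_left:
  assumes st: "0 < s" "0 < t" and x: "x \<in> E s" and y: "y \<in> E t"
  shows "pm s t (l2_scale c x) y = l2_scale c (pm s t x y)"
proof (rule pm_eqI[OF st])
  show "pm s t (l2_scale c x) y \<in> E (s + t)" "l2_scale c (pm s t x y) \<in> E (s + t)"
    using assms by (simp_all add: pm_mem fibre_scale)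
  show "l2_inner (pm s t (l2_scale c x) y) (pm s t z w) = l2_inner (l2_scale c (pm s t x y)) (pm s t z w)"
    if "z \<in> E s" "w \<in> E t" for z w
    using assms that by (simp add: pm_inner pm_l2 fibre_scale fibre_l2 l2_inner_scale_left)
qed

lemma pm_scale_right:
  assumes st: "0 < s" "0 < t" and x: "x \<in> E s" and y: "y \<in> E t"
  shows "pm s t x (l2_scale c y) = l2_scale c (pm s t x y)"
proof (rule pm_eqI[OF st])
  show "pm s t x (l2_scale c y) \<in> E (s + t)" "l2_scale c (pm s t x y) \<in> E (s + t)"
    using assms by (simp_all add: pm_mem fibre_scale)
  show "l2_inner (pm s t x (l2_scale c y)) (pm s t z w) = l2_inner (l2_scale c (pm s t x y)) (pm s t z w)"
    if "z \<in> E s" "w \<in> E t" for z w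
    using assms that by (simp add: pm_inner pm_l2 fibre_scale fibre_l2 l2_inner_scale_left mult.left_commute)
qed

lemma pm_diff_left:
  "0 < s \<Longrightarrow> 0 < t \<Longrightarrow> x \<in> E s \<Longrightarrow> x' \<in> E s \<Longrightarrow> y \<in> E t \<Longrightarrow>
    pm s t (l2_diff x x') y = l2_diff (pm s t x y) (pm s t x' y)"
  unfolding l2_diff_eq by (simp add: pm_add_left pm_scale_left fibre_scale)

lemma pm_diff_right:
  "0 < s \<Longrightarrow> 0 < t \<Longrightarrow> x \<in> E s \<Longrightarrow> y \<in> E t \<Longrightarrow> y' \<in> E t \<Longrightarrow>
    pm s t x (l2_diff y y') = l2_diff (pm s t x y) (pm s t x y')"
  unfolding l2_diff_eq by (simp add: pm_add_right pm_scale_right fibre_scale)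

lemma pm_norm:
  assumes st: "0 < s" "0 < t" and x: "x \<in> E s" and y: "y \<in> E t"
  shows "l2_norm (pm s t x y) = l2_norm x * l2_norm y"
proof -
  have l2: "pm s t x y \<in> l2" "x \<in> l2" "y \<in> l2"
    using assms by (simp_all add: pm_l2 fibre_l2)
  have "complex_of_real ((l2_norm (pm s t x y))\<^sup>2) = of_real ((l2_norm x * l2_norm y)\<^sup>2)"
    using pm_inner[OF st x x y y] by (simp add: l2_inner_self l2 power_mult_distrib)
  then have "(l2_norm (pm s t x y))\<^sup>2 = (l2_norm x * l2_norm y)\<^sup>2"
    by (simp only: of_real_eq_iff)
  then show ?thesis
    using l2 by (simp add: power2_eq_iff_nonneg l2_norm_nonneg)
qed

lemma pm_tendsto_left:
  assumes st: "0 < s" "0 < t" and X: "\<And>k. X k \<in> E s" and x: "x \<in> E s" and y: "y \<in> E t"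
    and lim: "(\<lambda>k. l2_norm (l2_diff (X k) x)) \<longlonglongrightarrow> 0"
  shows "(\<lambda>k. l2_norm (l2_diff (pm s t (X k) y) (pm s t x y))) \<longlonglongrightarrow> 0"
proof -
  have "l2_norm (l2_diff (pm s t (X k) y) (pm s t x y)) = l2_norm (l2_diff (X k) x) * l2_norm y" for k
    using st X x y by (simp add: pm_diff_left[symmetric] pm_norm fibre_diff)
  then show ?thesis
    using tendsto_mult_left_zero[OF lim] by simp
qed

lemma pm_tendsto_right:
  assumes st: "0 < s" "0 < t" and x: "x \<in> E s" and Y: "\<And>k. Y k \<in> E t" and y: "y \<in> E t"
    and lim: "(\<lambda>k. l2_norm (l2_diff (Y k) y)) \<longlonglongrightarrow> 0"
  shows "(\<lambda>k. l2_norm (l2_diff (pm s t x (Y k)) (pm s t x y))) \<longlonglongrightarrow> 0"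
proof -
  have "l2_norm (l2_diff (pm s t x (Y k)) (pm s t x y)) = l2_norm x * l2_norm (l2_diff (Y k) y)" for k
    using st x Y y by (simp add: pm_diff_right[symmetric] pm_norm fibre_diff)
  then show ?thesis
    using tendsto_mult_right_zero[OF lim] by simp
qed

lemma inner_measurable:
  assumes a: "meas_section E a" and b: "meas_section E b"
  shows "(\<lambda>t. l2_inner (a t) (b t)) \<in> borel_measurable (restrict_space borel {0<..})"
proof (rule borel_measurable_LIMSEQ_metric)
  have [measurable]: "(\<lambda>t. a t n) \<in> borel_measurable (restrict_space borel {0<..})"
    "(\<lambda>t. b t n) \<in> borel_measurable (restrict_space borel {0<..})" for n
    using a b unfolding meas_section_def by blast+
  show "(\<lambda>t. \<Sum>n<i. a t n * cnj (b t n)) \<in> borel_measurable (restrict_space borel {0<..})" for i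
    by measurable
  fix t :: real
  assume "t \<in> space (restrict_space borel {0<..})"
  then have "a t \<in> l2" "b t \<in> l2"
    using a b fibre_l2 unfolding meas_section_def by (auto simp: space_restrict_space)
  then show "(\<lambda>i. \<Sum>n<i. a t n * cnj (b t n)) \<longlonglongrightarrow> l2_inner (a t) (b t)"
    using l2_inner_sums sums_def by blast
qed

end

section \<open>Additive units and roots\<close>

lemma add_unitsI:
  assumes "meas_section E a" "\<And>t. t \<le> 0 \<Longrightarrow> a t = l2_zero"
    and "\<And>s t. 0 < s \<Longrightarrow> 0 < t \<Longrightarrow> a (s + t) = l2_add (pm s t (a s) (u t)) (pm s t (u s) (a t))"
  shows "a \<in> add_units E pm u"
  using assms unfolding add_units_def additive_unit_def by blast

lemma meas_sectionI:
  assumes "\<And>t. 0 < t \<Longrightarrow> f t \<in> E t" "\<And>n. (\<lambda>t. f t n) \<in> borel_measurable (restrict_space borel {0<..})"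
  shows "meas_section E f"
  using assms unfolding meas_section_def by blast

definition canonical_add_unit :: "(real \<Rightarrow> l2vec) \<Rightarrow> real \<Rightarrow> l2vec" where
  "canonical_add_unit u t = (if 0 < t then l2_scale (of_real t) (u t) else l2_zero)"

definition root_part :: "(real \<Rightarrow> l2vec) \<Rightarrow> (real \<Rightarrow> l2vec) \<Rightarrow> real \<Rightarrow> l2vec" where
  "root_part u a = sec_add a (sec_scale (- l2_inner (a 1) (u 1)) (canonical_add_unit u))"

lemma sec_diff_apply: "sec_add a (sec_scale (-1) b) t = l2_diff (a t) (b t)"
  by (simp add: sec_add_def sec_scale_def l2_diff_eq)

lemma sec_norm_diff:
  assumes "a 1 \<in> l2" "b 1 \<in> l2"
  shows "sqrt (Re (sec_inner (sec_add a (sec_scale (-1) b)) (sec_add a (sec_scale (-1) b))))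
    = l2_norm (l2_diff (a 1) (b 1))"
  using assms by (simp add: sec_inner_def sec_diff_apply l2_inner_self l2_diff_mem l2_norm_nonneg)

locale product_system_normalized_unit = product_system_l2 +
  fixes u :: "real \<Rightarrow> l2vec"
  assumes normalized_unit: "normalized_unit E pm u"
begin

lemma unit_meas_section: "meas_section E u"
  using normalized_unit unfolding normalized_unit_def ps_unit_def by blast

lemma unit_mem: "0 < t \<Longrightarrow> u t \<in> E t"
  using unit_meas_section unfolding meas_section_def by blast

lemma unit_l2: "0 < t \<Longrightarrow> u t \<in> l2"
  using unit_mem fibre_l2 by blast

lemma unit_mult: "0 < s \<Longrightarrow> 0 < t \<Longrightarrow> u (s + t) = pm s t (u s) (u t)"
  using normalized_unit unfolding normalized_unit_def ps_unit_def by blast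

lemma unit_norm: "0 < t \<Longrightarrow> l2_norm (u t) = 1"
  using normalized_unit unfolding normalized_unit_def by blast

lemma unit_inner_self: "0 < t \<Longrightarrow> l2_inner (u t) (u t) = 1"
  by (simp add: l2_inner_self unit_l2 unit_norm)

lemma add_units_meas_section: "a \<in> add_units E pm u \<Longrightarrow> meas_section E a"
  unfolding add_units_def additive_unit_def by blast

lemma add_units_mem: "a \<in> add_units E pm u \<Longrightarrow> 0 < t \<Longrightarrow> a t \<in> E t"
  using add_units_meas_section unfolding meas_section_def by blast

lemma add_units_l2: "a \<in> add_units E pm u \<Longrightarrow> 0 < t \<Longrightarrow> a t \<in> l2"
  using add_units_mem fibre_l2 by blast

lemma add_units_nonpos: "a \<in> add_units E pm u \<Longrightarrow> t \<le> 0 \<Longrightarrow> a t = l2_zero"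
  unfolding add_units_def additive_unit_def by blast

lemma add_units_additive:
  "a \<in> add_units E pm u \<Longrightarrow> 0 < s \<Longrightarrow> 0 < t \<Longrightarrow>
    a (s + t) = l2_add (pm s t (a s) (u t)) (pm s t (u s) (a t))"
  unfolding add_units_def additive_unit_def by blast

lemma add_units_coord_measurable:
  "a \<in> add_units E pm u \<Longrightarrow> (\<lambda>t. a t n) \<in> borel_measurable (restrict_space borel {0<..})"
  using add_units_meas_section unfolding meas_section_def by blast

lemma sec_add_add_units:
  assumes a: "a \<in> add_units E pm u" and b: "b \<in> add_units E pm u"
  shows "sec_add a b \<in> add_units E pm u"
proof (rule add_unitsI[OF meas_sectionI])
  show "sec_add a b t \<in> E t" if "0 < t" for t
    using that a b by (simp add: sec_add_def fibre_add add_units_mem)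
  show "(\<lambda>t. sec_add a b t n) \<in> borel_measurable (restrict_space borel {0<..})" for n
    using add_units_coord_measurable[OF a] add_units_coord_measurable[OF b]
    unfolding sec_add_def l2_add_def by measurable
  show "sec_add a b t = l2_zero" if "t \<le> 0" for t
    using that a b by (simp add: sec_add_def add_units_nonpos l2_add_def l2_zero_def)
  show "sec_add a b (s + t) = l2_add (pm s t (sec_add a b s) (u t)) (pm s t (u s) (sec_add a b t))"
    if "0 < s" "0 < t" for s t
    using that a b
    by (simp add: sec_add_def add_units_additive pm_add_left pm_add_right add_units_mem unit_mem)
      (simp add: l2_add_def algebra_simps)
qed

lemma sec_scale_add_units:
  assumes a: "a \<in> add_units E pm u"
  shows "sec_scale c a \<in> add_units E pm u"
proof (rule add_unitsI[OF meas_sectionI])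
  show "sec_scale c a t \<in> E t" if "0 < t" for t
    using that a by (simp add: sec_scale_def fibre_scale add_units_mem)
  show "(\<lambda>t. sec_scale c a t n) \<in> borel_measurable (restrict_space borel {0<..})" for n
    using add_units_coord_measurable[OF a] unfolding sec_scale_def l2_scale_def by measurable
  show "sec_scale c a t = l2_zero" if "t \<le> 0" for t
    using that a by (simp add: sec_scale_def add_units_nonpos l2_scale_def l2_zero_def)
  show "sec_scale c a (s + t) = l2_add (pm s t (sec_scale c a s) (u t)) (pm s t (u s) (sec_scale c a t))"
    if "0 < s" "0 < t" for s t
    using that a
    by (simp add: sec_scale_def add_units_additive pm_scale_left pm_scale_right add_units_mem unit_mem)
      (simp add: l2_add_def l2_scale_def algebra_simps)
qed

lemma canonical_add_unit_add_units: "canonical_add_unit u \<in> add_units E pm u"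
proof (rule add_unitsI[OF meas_sectionI])
  show "canonical_add_unit u t \<in> E t" if "0 < t" for t
    using that by (simp add: canonical_add_unit_def fibre_scale unit_mem)
  have u_meas: "(\<lambda>t. u t n) \<in> borel_measurable (restrict_space borel {0<..})" for n
    using unit_meas_section unfolding meas_section_def by blast
  have "(\<lambda>t. complex_of_real t * u t n) \<in> borel_measurable (restrict_space borel {0<..})" for n
    by (intro borel_measurable_times measurable_restrict_space1 borel_measurable_of_real u_meas)
  then show "(\<lambda>t. canonical_add_unit u t n) \<in> borel_measurable (restrict_space borel {0<..})" for n
    by (rule measurable_cong[THEN iffD1, rotated])
      (simp add: canonical_add_unit_def space_restrict_space l2_scale_def)
  show "canonical_add_unit u t = l2_zero" if "t \<le> 0" for t
    using that by (simp add: canonical_add_unit_def)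
  show "canonical_add_unit u (s + t)
      = l2_add (pm s t (canonical_add_unit u s) (u t)) (pm s t (u s) (canonical_add_unit u t))"
    if "0 < s" "0 < t" for s t
    using that
    by (simp add: canonical_add_unit_def pm_scale_left pm_scale_right unit_mem unit_mult)
      (simp add: l2_add_def l2_scale_def distrib_right)
qed

lemma sec_zero_add_units: "sec_zero \<in> add_units E pm u"
proof -
  have "sec_zero = sec_scale 0 (canonical_add_unit u)"
    by (simp add: sec_zero_def sec_scale_def l2_scale_def l2_zero_def)
  then show ?thesis
    using sec_scale_add_units[OF canonical_add_unit_add_units] by metis
qed

lemma add_units_inner_unit:
  assumes a: "a \<in> add_units E pm u" and "0 < t"
  shows "l2_inner (a t) (u t) = of_real t * l2_inner (a 1) (u 1)"
proof -
  have "(\<lambda>t. l2_inner (a t) (u t)) t = t *\<^sub>R (\<lambda>t. l2_inner (a t) (u t)) 1"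
  proof (rule additive_measurable_linear_euclidean[OF _ _ \<open>0 < t\<close>])
    show "(\<lambda>t. l2_inner (a t) (u t)) \<in> borel_measurable (restrict_space borel {0<..})"
      using inner_measurable[OF add_units_meas_section[OF a] unit_meas_section] .
    show "l2_inner (a (s + t)) (u (s + t)) = l2_inner (a s) (u s) + l2_inner (a t) (u t)"
      if "0 < s" "0 < t" for s t
      using that a
      by (simp add: add_units_additive unit_mult l2_inner_add_left pm_l2 pm_inner add_units_mem
          unit_mem unit_inner_self)
  qed
  then show ?thesis
    by (simp add: scaleR_conv_of_real)
qed

lemma roots_add_units: "r \<in> roots E pm u \<Longrightarrow> r \<in> add_units E pm u"
  unfolding roots_def root_def add_units_def by blast

lemma roots_inner_unit: "r \<in> roots E pm u \<Longrightarrow> 0 < t \<Longrightarrow> l2_inner (r t) (u t) = 0"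
  unfolding roots_def root_def by blast

lemma rootsI:
  "a \<in> add_units E pm u \<Longrightarrow> (\<And>t. 0 < t \<Longrightarrow> l2_inner (a t) (u t) = 0) \<Longrightarrow> a \<in> roots E pm u"
  unfolding roots_def root_def add_units_def by blast

lemma add_units_root_iff:
  assumes "a \<in> add_units E pm u"
  shows "a \<in> roots E pm u \<longleftrightarrow> l2_inner (a 1) (u 1) = 0"
proof
  assume "a \<in> roots E pm u"
  then show "l2_inner (a 1) (u 1) = 0"
    by (rule roots_inner_unit) simp
next
  assume "l2_inner (a 1) (u 1) = 0"
  then have "l2_inner (a t) (u t) = 0" if "0 < t" for t
    using add_units_inner_unit[OF assms that] by simp
  then show "a \<in> roots E pm u"
    using assms by (intro rootsI)
qed

lemma roots_norm_square:
  assumes r: "r \<in> roots E pm u" and "0 < t"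
  shows "(l2_norm (r t))\<^sup>2 = t * (l2_norm (r 1))\<^sup>2"
proof -
  have rA: "r \<in> add_units E pm u"
    using r by (rule roots_add_units)
  have norm_eq: "(l2_norm (r t))\<^sup>2 = Re (l2_inner (r t) (r t))" if "0 < t" for t
    using l2_inner_self[OF add_units_l2[OF rA that]] by simp
  have "Re (l2_inner (r t) (r t)) = t * Re (l2_inner (r 1) (r 1))"
  proof (rule additive_measurable_linear[OF _ _ \<open>0 < t\<close>])
    show "(\<lambda>t. Re (l2_inner (r t) (r t))) \<in> borel_measurable (restrict_space borel {0<..})"
      using inner_measurable[OF add_units_meas_section[OF rA] add_units_meas_section[OF rA]] by measurable
    fix s t :: real
    assume st: "0 < s" "0 < t"
    have "l2_inner (u s) (r s) = 0" "l2_inner (u t) (r t) = 0"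
      using st l2_inner_commute[OF add_units_l2[OF rA] unit_l2] roots_inner_unit[OF r] by simp_all
    then have "l2_inner (r (s + t)) (r (s + t)) = l2_inner (r s) (r s) + l2_inner (r t) (r t)"
      using st roots_inner_unit[OF r]
      by (simp add: add_units_additive[OF rA] l2_inner_add_left l2_inner_add_right pm_l2 pm_inner
          add_units_mem[OF rA] unit_mem unit_inner_self l2_add_mem)
    then show "Re (l2_inner (r (s + t)) (r (s + t))) = Re (l2_inner (r s) (r s)) + Re (l2_inner (r t) (r t))"
      by simp
  qed
  then show ?thesis
    using norm_eq[OF \<open>0 < t\<close>] norm_eq[of 1] by simp
qed

lemma root_part_roots:
  assumes a: "a \<in> add_units E pm u"
  shows "root_part u a \<in> roots E pm u"
proof (rule rootsI)
  show "root_part u a \<in> add_units E pm u"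
    unfolding root_part_def by (intro sec_add_add_units sec_scale_add_units a canonical_add_unit_add_units)
  show "l2_inner (root_part u a t) (u t) = 0" if "0 < t" for t
    using that a add_units_inner_unit[OF a that]
    by (simp add: root_part_def sec_add_def sec_scale_def canonical_add_unit_def l2_inner_add_left
        l2_inner_scale_left l2_scale_mem add_units_l2 unit_l2 unit_inner_self)
qed

lemma add_units_decomposition:
  "a = sec_add (root_part u a) (sec_scale (l2_inner (a 1) (u 1)) (canonical_add_unit u))"
  by (simp add: root_part_def sec_add_def sec_scale_def l2_add_def l2_scale_def fun_eq_iff)

lemma canonical_add_unit_not_root: "canonical_add_unit u \<notin> roots E pm u"
proof
  assume "canonical_add_unit u \<in> roots E pm u"
  from roots_inner_unit[OF this, of 1] show False
    by (simp add: canonical_add_unit_def l2_inner_scale_left unit_l2 unit_inner_self)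
qed

lemma add_units_norm_square:
  assumes a: "a \<in> add_units E pm u" and "0 < t"
  shows "(l2_norm (a t))\<^sup>2 = t * (l2_norm (root_part u a 1))\<^sup>2 + t\<^sup>2 * (cmod (l2_inner (a 1) (u 1)))\<^sup>2"
proof -
  define c where "c = l2_inner (a 1) (u 1)"
  have r: "root_part u a \<in> roots E pm u"
    using a by (rule root_part_roots)
  have rt: "root_part u a t \<in> l2"
    using add_units_l2[OF roots_add_units[OF r] \<open>0 < t\<close>] .
  have "a t = l2_add (root_part u a t) (l2_scale (c * of_real t) (u t))"
    using add_units_decomposition[of a] \<open>0 < t\<close>
    by (simp add: c_def sec_add_def sec_scale_def canonical_add_unit_def l2_scale_def fun_eq_iff
        mult.assoc)
  moreover have "l2_inner (root_part u a t) (l2_scale (c * of_real t) (u t)) = 0"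
    using rt unit_l2[OF \<open>0 < t\<close>] roots_inner_unit[OF r \<open>0 < t\<close>] by (simp add: l2_inner_scale_right)
  ultimately have "(l2_norm (a t))\<^sup>2 = (l2_norm (root_part u a t))\<^sup>2 + (l2_norm (l2_scale (c * of_real t) (u t)))\<^sup>2"
    using rt unit_l2[OF \<open>0 < t\<close>] by (simp add: l2_pythagoras l2_scale_mem)
  also have "\<dots> = t * (l2_norm (root_part u a 1))\<^sup>2 + t\<^sup>2 * (cmod c)\<^sup>2"
    using \<open>0 < t\<close> roots_norm_square[OF r \<open>0 < t\<close>]
    by (simp add: l2_norm_scale unit_l2 unit_norm norm_mult power_mult_distrib)
  finally show ?thesis
    unfolding c_def .
qed

lemma add_units_norm_le:
  assumes a: "a \<in> add_units E pm u" and "0 < t"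
  shows "l2_norm (a t) \<le> sqrt (t + t\<^sup>2) * l2_norm (a 1)"
proof -
  define R C where "R = (l2_norm (root_part u a 1))\<^sup>2" and "C = (cmod (l2_inner (a 1) (u 1)))\<^sup>2"
  have "(l2_norm (a t))\<^sup>2 = t * R + t\<^sup>2 * C" and "(l2_norm (a 1))\<^sup>2 = R + C"
    using add_units_norm_square[OF a \<open>0 < t\<close>] add_units_norm_square[OF a, of 1]
    by (simp_all add: R_def C_def)
  moreover have "t * R + t\<^sup>2 * C \<le> (t + t\<^sup>2) * (R + C)"
    using \<open>0 < t\<close> by (simp add: R_def C_def algebra_simps)
  ultimately have "(l2_norm (a t))\<^sup>2 \<le> (sqrt (t + t\<^sup>2) * l2_norm (a 1))\<^sup>2"
    using \<open>0 < t\<close> by (simp add: power_mult_distrib)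
  moreover have "0 \<le> sqrt (t + t\<^sup>2) * l2_norm (a 1)"
    using \<open>0 < t\<close> l2_norm_nonneg[OF add_units_l2[OF a, of 1]] by simp
  ultimately show ?thesis
    by (rule power2_le_imp_le)
qed

lemma add_units_eq_zero:
  assumes a: "a \<in> add_units E pm u" and "l2_norm (a 1) = 0"
  shows "a = sec_zero"
proof
  fix t
  show "a t = sec_zero t"
  proof (cases "0 < t")
    case True
    then have "l2_norm (a t) = 0"
      using add_units_norm_le[OF a True] \<open>l2_norm (a 1) = 0\<close> l2_norm_nonneg[OF add_units_l2[OF a True]]
      by simp
    then show ?thesis
      using add_units_l2[OF a True] by (simp add: sec_zero_def l2_norm_eq_0)
  qed (simp add: sec_zero_def add_units_nonpos[OF a])
qed

lemma add_units_closed_under_limits: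
  assumes X: "\<And>k. X k \<in> add_units E pm u" and nonpos: "\<And>t. t \<le> 0 \<Longrightarrow> x t = l2_zero"
    and x: "\<And>t. 0 < t \<Longrightarrow> x t \<in> l2"
    and lim: "\<And>t. 0 < t \<Longrightarrow> (\<lambda>k. l2_norm (l2_diff (X k t) (x t))) \<longlonglongrightarrow> 0"
  shows "x \<in> add_units E pm u"
proof -
  have mem: "x t \<in> E t" if "0 < t" for t
    using X by (intro fibre_closed[where X="\<lambda>k. X k t", OF that _ x lim] add_units_mem that)
  have coord: "(\<lambda>k. X k t n) \<longlonglongrightarrow> x t n" if "0 < t" for t n
    using X by (intro l2_norm_tendsto_coord[where X="\<lambda>k. X k t", OF _ x lim] add_units_l2 that)
  show ?thesis
  proof (rule add_unitsI[OF meas_sectionI])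
    show "(\<lambda>t. x t n) \<in> borel_measurable (restrict_space borel {0<..})" for n
      using add_units_coord_measurable[OF X] coord
      by (rule borel_measurable_LIMSEQ_metric[of "\<lambda>k t. X k t n"]) (auto simp: space_restrict_space)
    fix s t :: real
    assume st: "0 < s" "0 < t"
    have "(\<lambda>k. X k (s + t) n) \<longlonglongrightarrow> l2_add (pm s t (x s) (u t)) (pm s t (u s) (x t)) n" for n
    proof -
      have "(\<lambda>k. pm s t (X k s) (u t) n) \<longlonglongrightarrow> pm s t (x s) (u t) n"
        using st X mem lim
        by (intro l2_norm_tendsto_coord[OF _ _ pm_tendsto_left]) (simp_all add: pm_l2 add_units_mem unit_mem)
      moreover have "(\<lambda>k. pm s t (u s) (X k t) n) \<longlonglongrightarrow> pm s t (u s) (x t) n"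
        using st X mem lim
        by (intro l2_norm_tendsto_coord[OF _ _ pm_tendsto_right]) (simp_all add: pm_l2 add_units_mem unit_mem)
      ultimately show ?thesis
        unfolding add_units_additive[OF X st] l2_add_def by (rule tendsto_add)
    qed
    then show "x (s + t) = l2_add (pm s t (x s) (u t)) (pm s t (u s) (x t))"
      using coord st by (metis LIMSEQ_unique add_pos_pos ext)
  qed (use mem nonpos in auto)
qed

lemma add_units_complete:
  assumes X: "\<And>k. X k \<in> add_units E pm u"
    and Cauchy: "\<And>e. 0 < e \<Longrightarrow> \<exists>N. \<forall>m\<ge>N. \<forall>n\<ge>N. l2_norm (l2_diff (X m 1) (X n 1)) < e"
  obtains x where "x \<in> add_units E pm u" and "(\<lambda>k. l2_norm (l2_diff (X k 1) (x 1))) \<longlonglongrightarrow> 0"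
proof -
  have Cauchy_t: "\<exists>N. \<forall>m\<ge>N. \<forall>n\<ge>N. l2_norm (l2_diff (X m t) (X n t)) < e" if "0 < t" "0 < e" for t e
  proof -
    define K where "K = sqrt (t + t\<^sup>2)"
    have "0 < K"
      using \<open>0 < t\<close> by (simp add: K_def add_pos_pos)
    then obtain N where N: "\<forall>m\<ge>N. \<forall>n\<ge>N. l2_norm (l2_diff (X m 1) (X n 1)) < e / K"
      using Cauchy[of "e / K"] \<open>0 < e\<close> by auto
    have "l2_norm (l2_diff (X m t) (X n t)) < e" if "N \<le> m" "N \<le> n" for m n
    proof -
      have "sec_add (X m) (sec_scale (-1) (X n)) \<in> add_units E pm u"
        by (intro sec_add_add_units sec_scale_add_units X)
      from add_units_norm_le[OF this \<open>0 < t\<close>]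
      have "l2_norm (l2_diff (X m t) (X n t)) \<le> K * l2_norm (l2_diff (X m 1) (X n 1))"
        by (simp only: sec_diff_apply K_def)
      also have "\<dots> < K * (e / K)"
        using N that \<open>0 < K\<close> by (intro mult_strict_left_mono) auto
      finally show ?thesis
        using \<open>0 < K\<close> by simp
    qed
    then show ?thesis
      by blast
  qed
  define x where "x t = (\<lambda>n. lim (\<lambda>k. X k t n))" for t
  have lim: "(\<lambda>k. l2_norm (l2_diff (X k t) (x t))) \<longlonglongrightarrow> 0" and "x t \<in> l2" if "0 < t" for t
    using l2_complete[of "\<lambda>k. X k t"] add_units_l2[OF X that] Cauchy_t[OF that] by (simp_all add: x_def)
  moreover have "x t = l2_zero" if "t \<le> 0" for t
    using add_units_nonpos[OF X that] by (simp add: x_def l2_zero_def)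
  ultimately have "x \<in> add_units E pm u"
    by (intro add_units_closed_under_limits[OF X])
  with lim[of 1] show ?thesis
    using that by simp
qed

section \<open>The Hilbert space of additive units\<close>

lemma add_units_hilbert_space: "hilbert_space (add_units E pm u) sec_add sec_scale sec_zero sec_inner"
  unfolding hilbert_space_def
proof (intro conjI ballI allI impI)
  show "sec_zero \<in> add_units E pm u"
    by (rule sec_zero_add_units)
next
  fix a b assume "a \<in> add_units E pm u" "b \<in> add_units E pm u"
  then show "sec_add a b \<in> add_units E pm u"
    by (rule sec_add_add_units)
next
  fix z a assume "a \<in> add_units E pm u"
  then show "sec_scale z a \<in> add_units E pm u"
    by (rule sec_scale_add_units)
next
  fix a b c :: "real \<Rightarrow> l2vec"
  show "sec_add (sec_add a b) c = sec_add a (sec_add b c)" "sec_add a b = sec_add b a"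
    "sec_add a sec_zero = a"
    by (simp_all add: sec_add_def sec_zero_def l2_add_def l2_zero_def add_ac)
next
  fix a assume "a \<in> add_units E pm u"
  then show "\<exists>b\<in>add_units E pm u. sec_add a b = sec_zero"
    by (intro bexI[of _ "sec_scale (-1) a"] sec_scale_add_units)
      (simp_all add: sec_add_def sec_scale_def sec_zero_def l2_add_def l2_scale_def l2_zero_def)
next
  fix z w :: complex and a b :: "real \<Rightarrow> l2vec"
  show "sec_scale z (sec_scale w a) = sec_scale (z * w) a" "sec_scale 1 a = a"
    "sec_scale z (sec_add a b) = sec_add (sec_scale z a) (sec_scale z b)"
    "sec_scale (z + w) a = sec_add (sec_scale z a) (sec_scale w a)"
    by (simp_all add: sec_add_def sec_scale_def l2_add_def l2_scale_def algebra_simps)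
next
  fix a b c assume a: "a \<in> add_units E pm u" and b: "b \<in> add_units E pm u" and c: "c \<in> add_units E pm u"
  show "sec_inner (sec_add a b) c = sec_inner a c + sec_inner b c"
    using a b c by (simp add: sec_inner_def sec_add_def l2_inner_add_left add_units_l2)
next
  fix z a b assume a: "a \<in> add_units E pm u" and b: "b \<in> add_units E pm u"
  show "sec_inner (sec_scale z a) b = z * sec_inner a b"
    using a b by (simp add: sec_inner_def sec_scale_def l2_inner_scale_left add_units_l2)
next
  fix a b assume a: "a \<in> add_units E pm u" and b: "b \<in> add_units E pm u"
  show "sec_inner b a = cnj (sec_inner a b)"
    unfolding sec_inner_def using a b by (intro l2_inner_commute add_units_l2) simp_all
next
  fix a assume a: "a \<in> add_units E pm u"
  show "sec_inner a a \<in> \<real>" "0 \<le> Re (sec_inner a a)"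
    using a by (simp_all add: sec_inner_def l2_inner_self add_units_l2)
next
  fix a assume a: "a \<in> add_units E pm u" and "sec_inner a a = 0"
  then show "a = sec_zero"
    by (intro add_units_eq_zero) (simp_all add: sec_inner_def l2_inner_self add_units_l2)
next
  fix X :: "nat \<Rightarrow> real \<Rightarrow> l2vec"
  assume assm: "(\<forall>k. X k \<in> add_units E pm u) \<and>
    (\<forall>\<epsilon>>0. \<exists>N. \<forall>m\<ge>N. \<forall>n\<ge>N. sqrt (Re (sec_inner (sec_add (X m) (sec_scale (-1) (X n)))
       (sec_add (X m) (sec_scale (-1) (X n))))) < \<epsilon>)"
  then have X: "\<And>k. X k \<in> add_units E pm u"
    by blast
  from assm have "\<forall>\<epsilon>>0. \<exists>N. \<forall>m\<ge>N. \<forall>n\<ge>N. l2_norm (l2_diff (X m 1) (X n 1)) < \<epsilon>"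
    by (simp add: sec_norm_diff add_units_l2[OF X])
  then obtain x where "x \<in> add_units E pm u" "(\<lambda>k. l2_norm (l2_diff (X k 1) (x 1))) \<longlonglongrightarrow> 0"
    using add_units_complete[of X, OF X] by blast
  then show "\<exists>x\<in>add_units E pm u. (\<lambda>k. sqrt (Re (sec_inner (sec_add (X k) (sec_scale (-1) x))
      (sec_add (X k) (sec_scale (-1) x))))) \<longlonglongrightarrow> 0"
    using X by (simp add: sec_norm_diff add_units_l2) blast
qed

lemma roots_closed_subspace:
  "closed_subspace_of (roots E pm u) (add_units E pm u) sec_add sec_scale sec_zero sec_inner"
  unfolding closed_subspace_of_def
proof (intro conjI ballI allI impI)
  show "roots E pm u \<subseteq> add_units E pm u"
    using roots_add_units by blast
  show "sec_zero \<in> roots E pm u"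
    using add_units_root_iff[OF sec_zero_add_units] by (simp add: sec_zero_def)
next
  fix a b assume a: "a \<in> roots E pm u" and b: "b \<in> roots E pm u"
  then have "l2_inner (a 1) (u 1) = 0" "l2_inner (b 1) (u 1) = 0"
    by (simp_all add: roots_inner_unit)
  then show "sec_add a b \<in> roots E pm u"
    using a b add_units_root_iff[OF sec_add_add_units[OF roots_add_units[OF a] roots_add_units[OF b]]]
    by (simp add: sec_add_def l2_inner_add_left add_units_l2 roots_add_units unit_l2)
next
  fix c a assume a: "a \<in> roots E pm u"
  then have "l2_inner (a 1) (u 1) = 0"
    by (simp add: roots_inner_unit)
  then show "sec_scale c a \<in> roots E pm u"
    using a add_units_root_iff[OF sec_scale_add_units[OF roots_add_units[OF a]]]
    by (simp add: sec_scale_def l2_inner_scale_left add_units_l2 roots_add_units unit_l2)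
next
  fix X x
  assume assm: "(\<forall>k. X k \<in> roots E pm u) \<and> x \<in> add_units E pm u \<and>
    (\<lambda>k. sqrt (Re (sec_inner (sec_add (X k) (sec_scale (-1) x)) (sec_add (X k) (sec_scale (-1) x))))) \<longlonglongrightarrow> 0"
  then have X: "\<And>k. X k \<in> roots E pm u" and x: "x \<in> add_units E pm u"
    by blast+
  have X1: "X k 1 \<in> l2" for k
    using add_units_l2[OF roots_add_units[OF X]] by simp
  have x1: "x 1 \<in> l2"
    using add_units_l2[OF x] by simp
  have lim: "(\<lambda>k. l2_norm (l2_diff (X k 1) (x 1))) \<longlonglongrightarrow> 0"
    using assm X1 x1 by (simp add: sec_norm_diff)
  have "cmod (l2_inner (x 1) (u 1)) \<le> l2_norm (l2_diff (X k 1) (x 1))" for k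
  proof -
    have "l2_inner (l2_diff (X k 1) (x 1)) (u 1) = - l2_inner (x 1) (u 1)"
      using X1 x1 unit_l2[of 1] roots_inner_unit[OF X, of 1]
      by (simp add: l2_diff_eq l2_inner_add_left l2_inner_scale_left l2_scale_mem)
    then show ?thesis
      using l2_inner_unit_le[OF l2_diff_mem[OF X1 x1] unit_l2] unit_norm by (metis norm_minus_cancel zero_less_one)
  qed
  then have "cmod (l2_inner (x 1) (u 1)) \<le> 0"
    using LIMSEQ_le_const[OF lim] by blast
  then show "x \<in> roots E pm u"
    using add_units_root_iff[OF x] by simp
qed

lemma roots_codim_one: "codim_one (roots E pm u) (add_units E pm u) sec_add sec_scale"
  unfolding codim_one_def
proof (intro bexI conjI ballI)
  show "canonical_add_unit u \<in> add_units E pm u" "canonical_add_unit u \<notin> roots E pm u"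
    by (simp_all add: canonical_add_unit_add_units canonical_add_unit_not_root)
  fix a assume "a \<in> add_units E pm u"
  then show "\<exists>c. \<exists>r\<in>roots E pm u. a = sec_add r (sec_scale c (canonical_add_unit u))"
    using add_units_decomposition root_part_roots by blast
qed

end

theorem mainTheorem1:
  fixes E :: "real \<Rightarrow> l2vec set"
    and pm :: "real \<Rightarrow> real \<Rightarrow> l2vec \<Rightarrow> l2vec \<Rightarrow> l2vec"
    and u :: "real \<Rightarrow> l2vec"
  assumes "product_system E pm"
    and "normalized_unit E pm u"
  shows "hilbert_space (add_units E pm u) sec_add sec_scale sec_zero sec_inner \<and>
         closed_subspace_of (roots E pm u) (add_units E pm u) sec_add sec_scale sec_zero sec_inner \<and>
         codim_one (roots E pm u) (add_units E pm u) sec_add sec_scale"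
proof -
  interpret product_system_normalized_unit E pm u
    using assms by unfold_locales
  show ?thesis
    using add_units_hilbert_space roots_closed_subspace roots_codim_one by blast
qed

end
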